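(* Let $\tau=\lfloor \zeta/(w-1)\rfloor+1$. There exists a constant $C>0$ such that for every $\sigma>(1-2^{-w\tau})^{1/\tau}$, every integer $t\ge 0$ and every initial state $s_0\in[-\zeta,\zeta]\cap\mathbb Z$ of the absorbing system, $\mathbb P(H_t)\le C\sigma^t$.
   Context: Fix a positive integer $\zeta$, integers $w_k$ ($k\in\mathbb Z$) and an integer $w>1$ with $w_k\ge w$ for all $k$, and a policy $\pi:\mathbb Z\to\{-1,0,1\}$. On a probability space $(\Omega,\Sigma,\mathbb P)$ let $\eta_t(k)\sim\mathrm{Bin}(w_k,\tfrac12)$ be independent random variables ($t\in\mathbb N\cup\{0\}$, $k\in\mathbb Z$) and set $W_t(k)=2\eta_t(k)-w_k$. The "absorbing system" has state space $\{-\zeta,\dots,\zeta\}\cup\{s_*\}$, where $s_*$ is an extra absorbing state: $S_0=s_0\in[-\zeta,\zeta]\cap\mathbb Z$, and $S_{t+1}=S_t+\pi(S_t)+W_t(S_t)$ if $S_t\in[-\zeta,\zeta]$ and $|S_t+\pi(S_t)+W_t(S_t)|\le\zeta$, while $S_{t+1}=s_*$ otherwise. $H_t$ denotes the survival event $\{S_t\ne s_*\}$. *)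

theory Defs
  imports "HOL-Probability.Probability"
begin

text \<open>The state is an option: None is the absorbing
state s_*, Some s a state in [-zeta, zeta].  eta t k omega is the random
variable eta_t(k), wk k is w_k, pol is the policy pi.  Then
W_t(k) = 2 eta_t(k) - w_k.\<close>

primrec absS :: "int \<Rightarrow> (int \<Rightarrow> int) \<Rightarrow> (int \<Rightarrow> int) \<Rightarrow> (nat \<Rightarrow> int \<Rightarrow> 'a \<Rightarrow> nat)
                 \<Rightarrow> int \<Rightarrow> nat \<Rightarrow> 'a \<Rightarrow> int option" where
  "absS zeta wk pol eta s0 0 \<omega> = Some s0"
| "absS zeta wk pol eta s0 (Suc t) \<omega> =
     (case absS zeta wk pol eta s0 t \<omega> of
        None \<Rightarrow> None
      | Some s \<Rightarrow>
          (let s' = s + pol s + (2 * int (eta t s \<omega>) - wk s)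
           in if \<bar>s\<bar> \<le> zeta \<and> \<bar>s'\<bar> \<le> zeta then Some s' else None))"

end

theory Submission
  imports Defs
begin

text \<open>From every state the system leaves [-zeta, zeta] within tau steps with probability at
  least 2^(-w tau).  At distance d from the nearer boundary, either w_k \<le> d and the step with
  all w_k trials successful (probability 2^(-w_k)) advances at least w_k - 1 \<ge> w - 1 towards it,
  or w_k > d and the upper binomial tail P(W \<ge> d + 1) \<ge> 2^(-(d+2)) exits at once; since
  tau (w - 1) \<ge> zeta + 1, induction over the number of remaining steps gives the bound.  The
  driving variables of disjoint time blocks are independent, so surviving k blocks of length tau
  has probability at most (1 - 2^(-w tau))^k, which is the claim with C = 1 / (1 - 2^(-w tau)).\<close>

section \<open>Upper tails of the symmetric binomial distribution\<close>

definition binomial_upper_tail :: "nat \<Rightarrow> int \<Rightarrow> real" where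
  "binomial_upper_tail n j = (\<Sum>h\<le>n. if int n + j \<le> 2 * int h then real (n choose h) else 0)"

lemma binomial_upper_tail_nonneg: "binomial_upper_tail n j \<ge> 0"
  unfolding binomial_upper_tail_def by (intro sum_nonneg) auto

lemma binomial_upper_tail_Suc:
  assumes "j \<ge> 0"
  shows "binomial_upper_tail (Suc n) j = binomial_upper_tail n (j + 1) + binomial_upper_tail n (j - 1)"
proof -
  let ?shifted = "\<lambda>j. \<Sum>h\<le>n. if int n + j \<le> 2 * int (Suc h) then real (n choose Suc h) else 0"
  have "binomial_upper_tail n (j + 1)
      = (\<Sum>h\<le>Suc n. if int n + (j + 1) \<le> 2 * int h then real (n choose h) else 0)"
    unfolding binomial_upper_tail_def by simp
  also have "\<dots> = ?shifted (j + 1)"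
    using assms by (subst sum.atMost_Suc_shift) simp
  finally have shift: "binomial_upper_tail n (j + 1) = ?shifted (j + 1)" .
  have "binomial_upper_tail (Suc n) j
      = (\<Sum>h\<le>n. if int (Suc n) + j \<le> 2 * int (Suc h) then real (Suc n choose Suc h) else 0)"
    unfolding binomial_upper_tail_def using assms by (subst sum.atMost_Suc_shift) simp
  also have "\<dots> = (\<Sum>h\<le>n. (if int n + (j - 1) \<le> 2 * int h then real (n choose h) else 0)
                    + (if int n + (j + 1) \<le> 2 * int (Suc h) then real (n choose Suc h) else 0))"
    by (intro sum.cong refl) auto
  also have "\<dots> = binomial_upper_tail n (j - 1) + ?shifted (j + 1)"
    unfolding binomial_upper_tail_def by (simp add: sum.distrib)
  finally show ?thesis using shift by simp
qed

lemma binomial_upper_tail_0: "2 ^ n \<le> 2 * binomial_upper_tail n 0"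
proof -
  have row: "(\<Sum>h\<le>n. real (n choose h)) = 2 ^ n"
    by (metis choose_row_sum of_nat_numeral of_nat_power of_nat_sum)
  have lower_half: "(\<Sum>h\<le>n. if 2 * int h \<le> int n then real (n choose h) else 0) = binomial_upper_tail n 0"
  proof -
    have "(\<Sum>h=0..n. if 2 * int h \<le> int n then real (n choose h) else 0)
        = (\<Sum>h=0..n. if 2 * int (n + 0 - h) \<le> int n then real (n choose (n + 0 - h)) else 0)"
      by (rule sum.atLeastAtMost_rev)
    also have "\<dots> = (\<Sum>h=0..n. if int n + 0 \<le> 2 * int h then real (n choose h) else 0)"
      by (intro sum.cong refl) (auto simp: binomial_symmetric[symmetric] of_nat_diff)
    finally show ?thesis by (simp add: binomial_upper_tail_def atLeast0AtMost)
  qed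
  have "(\<Sum>h\<le>n. real (n choose h)) \<le> (\<Sum>h\<le>n. (if int n + 0 \<le> 2 * int h then real (n choose h) else 0)
            + (if 2 * int h \<le> int n then real (n choose h) else 0))"
    by (intro sum_mono) auto
  also have "\<dots> = 2 * binomial_upper_tail n 0"
    using lower_half by (simp add: sum.distrib binomial_upper_tail_def)
  finally show ?thesis using row by simp
qed

lemma binomial_upper_tail_ge:
  "0 \<le> j \<Longrightarrow> j \<le> int n \<Longrightarrow> 2 ^ n \<le> 2 ^ (nat j + 1) * binomial_upper_tail n j"
proof (induction n arbitrary: j)
  case 0
  then show ?case using binomial_upper_tail_0[of 0] by simp
next
  case (Suc n)
  show ?case
  proof (cases "j = 0")
    case True
    then show ?thesis using binomial_upper_tail_0[of "Suc n"] by simp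
  next
    case False
    then have "0 \<le> j - 1" "j - 1 \<le> int n" "nat (j - 1) + 1 = nat j"
      using Suc.prems by auto
    then have "2 ^ n \<le> 2 ^ nat j * binomial_upper_tail n (j - 1)"
      using Suc.IH[of "j - 1"] by simp
    also have "\<dots> \<le> 2 ^ nat j * binomial_upper_tail (Suc n) j"
      using binomial_upper_tail_Suc[of j n] binomial_upper_tail_nonneg[of n "j + 1"] Suc.prems
      by (intro mult_left_mono) auto
    finally show ?thesis by simp
  qed
qed

definition binom_half :: "nat \<Rightarrow> nat \<Rightarrow> real" where
  "binom_half n h = real (n choose h) / 2 ^ n"

lemma binom_half_nonneg: "binom_half n h \<ge> 0"
  by (simp add: binom_half_def)

lemma sum_binom_half: "(\<Sum>h\<le>n. binom_half n h) = 1"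
  by (simp add: binom_half_def flip: sum_divide_distrib)
     (metis choose_row_sum of_nat_numeral of_nat_power of_nat_sum)

lemma pmf_binomial_half: "h \<le> n \<Longrightarrow> pmf (binomial_pmf n (1/2)) h = binom_half n h"
  by (simp add: binom_half_def power_one_over flip: power_add)

lemma binom_half_upper_tail:
  assumes "0 \<le> j" "j \<le> int n"
  shows "(1/2) ^ (nat j + 1) \<le> (\<Sum>h\<le>n. if int n + j \<le> 2 * int h then binom_half n h else 0)"
proof -
  have "(\<Sum>h\<le>n. if int n + j \<le> 2 * int h then binom_half n h else 0) = binomial_upper_tail n j / 2 ^ n"
    unfolding binomial_upper_tail_def binom_half_def sum_divide_distrib by (intro sum.cong refl) auto
  moreover have "2 ^ n \<le> 2 ^ (nat j + 1) * binomial_upper_tail n j"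
    using binomial_upper_tail_ge assms .
  then have "1 / 2 ^ (nat j + 1) \<le> binomial_upper_tail n j / 2 ^ n"
    by (simp add: divide_simps mult.commute)
  ultimately show ?thesis by (simp add: power_one_over)
qed

section \<open>A lower bound for the exit probability\<close>

text \<open>A lower bound for the probability of leaving [-zeta, zeta] within m steps from x:
  zeta + 1 - |x| is the distance to the nearer exit, and the bound is only claimed when m steps
  of size w - 1 cover it.  exit_lb_next is the bound after one step to s + p + 2 h - n, where 1
  accounts for that step already leaving.\<close>

definition exit_lb :: "int \<Rightarrow> int \<Rightarrow> nat \<Rightarrow> int \<Rightarrow> real" where
  "exit_lb zeta w m x =
     (if zeta + 1 - \<bar>x\<bar> \<le> int m * (w - 1) then (1/2) ^ (nat (zeta + 1 - \<bar>x\<bar>) + m + 1) else 0)"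

definition exit_lb_next :: "int \<Rightarrow> int \<Rightarrow> nat \<Rightarrow> int \<Rightarrow> int \<Rightarrow> nat \<Rightarrow> nat \<Rightarrow> real" where
  "exit_lb_next zeta w m s p n h =
     (if \<bar>s + p + 2 * int h - int n\<bar> \<le> zeta then exit_lb zeta w m (s + p + 2 * int h - int n) else 1)"

lemma exit_lb_nonneg: "exit_lb zeta w m x \<ge> 0"
  by (simp add: exit_lb_def)

lemma exit_lb_uminus: "exit_lb zeta w m (- x) = exit_lb zeta w m x"
  by (simp add: exit_lb_def)

lemma exit_lb_next_nonneg: "exit_lb_next zeta w m s p n h \<ge> 0"
  by (simp add: exit_lb_next_def exit_lb_nonneg)

lemma exit_lb_next_uminus:
  "h \<le> n \<Longrightarrow> exit_lb_next zeta w m (- s) (- p) n (n - h) = exit_lb_next zeta w m s p n h"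
proof -
  assume "h \<le> n"
  then have reflect: "- s + - p + 2 * int (n - h) - int n = - (s + p + 2 * int h - int n)"
    by (simp add: of_nat_diff)
  show ?thesis
    unfolding exit_lb_next_def reflect abs_minus_cancel exit_lb_uminus ..
qed

lemma half_pow_antimono: "a \<le> b \<Longrightarrow> ((1::real)/2) ^ b \<le> (1/2) ^ a"
  by (rule power_decreasing) auto

lemma exit_lb_Suc_all_heads:
  assumes s: "0 \<le> s" "s \<le> zeta" and p: "p \<in> {-1, 0, 1}" and n: "w \<le> int n" "int n \<le> d"
    and d: "d = zeta + 1 - s" "d \<le> int (Suc m) * (w - 1)" and w: "w > 1"
  shows "(1/2) ^ (nat d + m + 2) \<le> binom_half n n * exit_lb_next zeta w m s p n n"
proof -
  have heads: "binom_half n n = (1/2) ^ n"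
    by (simp add: binom_half_def power_one_over)
  define s' where "s' = s + p + int n"
  have s': "s' \<ge> s + int n - 1" "s' \<ge> 0"
    using p s n w by (auto simp: s'_def)
  show ?thesis
  proof (cases "s' \<le> zeta")
    case False
    then have "exit_lb_next zeta w m s p n n = 1"
      using s' by (simp add: exit_lb_next_def s'_def)
    moreover have "((1::real)/2) ^ (nat d + m + 2) \<le> (1/2) ^ n"
      using n d s by (intro half_pow_antimono) linarith
    ultimately show ?thesis using heads by simp
  next
    case True
    define d' where "d' = zeta + 1 - s'"
    have d': "1 \<le> d'" "d' \<le> d - int n + 1" "d' \<le> int m * (w - 1)"
      using True s' d n by (auto simp: d'_def algebra_simps)
    have "s + p + 2 * int n - int n = s'"
      by (simp add: s'_def)
    then have "exit_lb_next zeta w m s p n n = (1/2) ^ (nat d' + m + 1)"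
      using True d' s' by (simp add: exit_lb_next_def exit_lb_def d'_def)
    then have "binom_half n n * exit_lb_next zeta w m s p n n = (1/2) ^ (n + nat d' + m + 1)"
      using heads by (simp add: power_add)
    moreover have "((1::real)/2) ^ (nat d + m + 2) \<le> (1/2) ^ (n + nat d' + m + 1)"
      using d' by (intro half_pow_antimono) linarith
    ultimately show ?thesis by simp
  qed
qed

lemma exit_lb_Suc_tail:
  assumes s: "0 \<le> s" "s \<le> zeta" and p: "p \<in> {-1, 0, 1}" and n: "d < int n" and d: "d = zeta + 1 - s"
  shows "(1/2) ^ (nat d + m + 2)
           \<le> (\<Sum>h\<le>n. if int n < 2 * int h then binom_half n h * exit_lb_next zeta w m s p n h else 0)"
proof -
  have "((1::real)/2) ^ (nat d + m + 2) \<le> (1/2) ^ (nat (d + 1) + 1)"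
    using s d by (intro half_pow_antimono) linarith
  also have "\<dots> \<le> (\<Sum>h\<le>n. if int n + (d + 1) \<le> 2 * int h then binom_half n h else 0)"
    using s n d by (intro binom_half_upper_tail) auto
  also have "\<dots> \<le> (\<Sum>h\<le>n. if int n < 2 * int h then binom_half n h * exit_lb_next zeta w m s p n h else 0)"
  proof (intro sum_mono)
    fix h
    show "(if int n + (d + 1) \<le> 2 * int h then binom_half n h else 0)
          \<le> (if int n < 2 * int h then binom_half n h * exit_lb_next zeta w m s p n h else 0)"
    proof (cases "int n + (d + 1) \<le> 2 * int h")
      case True
      then have "exit_lb_next zeta w m s p n h = 1"
        using p s d by (auto simp: exit_lb_next_def)
      then show ?thesis using True s d by simp
    qed (simp add: binom_half_nonneg exit_lb_next_nonneg)
  qed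
  finally show ?thesis .
qed

lemma exit_lb_Suc_right:
  assumes s: "0 \<le> s" "s \<le> zeta" and p: "p \<in> {-1, 0, 1}" and w: "w > 1" and n: "int n \<ge> w"
  shows "exit_lb zeta w (Suc m) s
           \<le> (\<Sum>h\<le>n. if int n < 2 * int h then binom_half n h * exit_lb_next zeta w m s p n h else 0)"
    (is "_ \<le> ?right")
proof -
  define d where "d = zeta + 1 - s"
  have right_nonneg: "0 \<le> ?right"
    by (intro sum_nonneg) (simp add: binom_half_nonneg exit_lb_next_nonneg)
  show ?thesis
  proof (cases "d \<le> int (Suc m) * (w - 1)")
    case False
    then show ?thesis using s right_nonneg by (simp add: exit_lb_def d_def)
  next
    case True
    then have "exit_lb zeta w (Suc m) s = (1/2) ^ (nat d + m + 2)"
      using s by (simp add: exit_lb_def d_def)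
    moreover have "(1/2) ^ (nat d + m + 2) \<le> ?right"
    proof (cases "int n \<le> d")
      case n_le: True
      have "(if int n < 2 * int n then binom_half n n * exit_lb_next zeta w m s p n n else 0) \<le> ?right"
        by (intro member_le_sum) (auto simp: binom_half_nonneg exit_lb_next_nonneg)
      then have "binom_half n n * exit_lb_next zeta w m s p n n \<le> ?right"
        using n w by simp
      then show ?thesis
        using exit_lb_Suc_all_heads[OF s p n n_le d_def True w] by linarith
    next
      case False
      then show ?thesis using exit_lb_Suc_tail[OF s p _ d_def] by simp
    qed
    ultimately show ?thesis by simp
  qed
qed

lemma exit_lb_Suc_left:
  assumes s: "s \<le> 0" "- s \<le> zeta" and p: "p \<in> {-1, 0, 1}" and w: "w > 1" and n: "int n \<ge> w"
  shows "exit_lb zeta w (Suc m) s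
           \<le> (\<Sum>h\<le>n. if 2 * int h < int n then binom_half n h * exit_lb_next zeta w m s p n h else 0)"
proof -
  have "exit_lb zeta w (Suc m) s = exit_lb zeta w (Suc m) (- s)"
    by (simp add: exit_lb_uminus)
  also have "\<dots> \<le> (\<Sum>h=0..n. if int n < 2 * int h
                      then binom_half n h * exit_lb_next zeta w m (- s) (- p) n h else 0)"
    using s p w n exit_lb_Suc_right[of "- s" zeta "- p" w n m] by (auto simp: atLeast0AtMost)
  also have "\<dots> = (\<Sum>h=0..n. if int n < 2 * int (n + 0 - h)
                      then binom_half n (n + 0 - h) * exit_lb_next zeta w m (- s) (- p) n (n + 0 - h) else 0)"
    by (rule sum.atLeastAtMost_rev)
  also have "\<dots> = (\<Sum>h\<le>n. if 2 * int h < int n then binom_half n h * exit_lb_next zeta w m s p n h else 0)"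
    unfolding atLeast0AtMost
    by (intro sum.cong refl)
      (auto simp: of_nat_diff exit_lb_next_uminus binom_half_def binomial_symmetric[symmetric])
  finally show ?thesis .
qed

lemma sum_half_le_exit_lb_next:
  "(\<Sum>h\<le>n. if P h then binom_half n h * exit_lb_next zeta w m s p n h else 0)
     \<le> (\<Sum>h\<le>n. binom_half n h * exit_lb_next zeta w m s p n h)"
  by (intro sum_mono) (simp add: binom_half_nonneg exit_lb_next_nonneg)

lemma exit_lb_Suc:
  assumes s: "\<bar>s\<bar> \<le> zeta" and p: "p \<in> {-1, 0, 1}" and w: "w > 1" and n: "int n \<ge> w"
  shows "exit_lb zeta w (Suc m) s \<le> (\<Sum>h\<le>n. binom_half n h * exit_lb_next zeta w m s p n h)"
proof (cases "s \<ge> 0")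
  case True
  then show ?thesis
    using s p w n by (intro order_trans[OF exit_lb_Suc_right sum_half_le_exit_lb_next]) auto
next
  case False
  then show ?thesis
    using s p w n by (intro order_trans[OF exit_lb_Suc_left sum_half_le_exit_lb_next]) auto
qed

text \<open>At the centre both halves of the binomial distribution lead to an exit, which gains
  the factor 2 lost by the larger distance zeta + 1 to the boundary.\<close>

lemma exit_lb_Suc_centre:
  assumes "zeta \<ge> 0" and p: "p \<in> {-1, 0, 1}" and w: "w > 1" and n: "int n \<ge> w"
  shows "2 * exit_lb zeta w (Suc m) 0 \<le> (\<Sum>h\<le>n. binom_half n h * exit_lb_next zeta w m 0 p n h)"
proof -
  have "2 * exit_lb zeta w (Suc m) 0
     \<le> (\<Sum>h\<le>n. (if int n < 2 * int h then binom_half n h * exit_lb_next zeta w m 0 p n h else 0)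
               + (if 2 * int h < int n then binom_half n h * exit_lb_next zeta w m 0 p n h else 0))"
    using exit_lb_Suc_right[of 0 zeta p w n m] exit_lb_Suc_left[of 0 zeta p w n m] assms
    by (simp add: sum.distrib)
  also have "\<dots> \<le> (\<Sum>h\<le>n. binom_half n h * exit_lb_next zeta w m 0 p n h)"
    by (intro sum_mono) (auto simp: binom_half_nonneg exit_lb_next_nonneg)
  finally show ?thesis .
qed

lemma exit_within_block:
  assumes s: "\<bar>s\<bar> \<le> zeta" and p: "p \<in> {-1, 0, 1}" and w: "w > 1" and n: "int n \<ge> w"
    and block: "zeta + 1 \<le> int (Suc m) * (w - 1)"
  shows "(1/2) ^ nat (w * int (Suc m)) \<le> (\<Sum>h\<le>n. binom_half n h * exit_lb_next zeta w m s p n h)"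
proof (cases "s = 0")
  case True
  have "((1::real)/2) ^ nat (w * int (Suc m)) \<le> (1/2) ^ (nat (zeta + 1) + Suc m)"
    using block s by (intro half_pow_antimono) (simp add: algebra_simps nat_le_iff)
  also have "\<dots> = 2 * exit_lb zeta w (Suc m) 0"
    using block s by (simp add: exit_lb_def)
  finally show ?thesis
    using exit_lb_Suc_centre[of zeta p w n m] s p w n True by simp
next
  case False
  have "((1::real)/2) ^ nat (w * int (Suc m)) \<le> (1/2) ^ (nat (zeta + 1 - \<bar>s\<bar>) + Suc m + 1)"
    using block s False by (intro half_pow_antimono) (simp add: algebra_simps nat_le_iff)
  also have "\<dots> = exit_lb zeta w (Suc m) s"
    using block s False by (simp add: exit_lb_def)
  finally show ?thesis
    using exit_lb_Suc[OF s p w n, of m] by simp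
qed

section \<open>The absorbing system: Markov property and geometric decay\<close>

lemma absS_bounded:
  assumes "\<bar>s0\<bar> \<le> zeta" "absS zeta wk pol eta s0 t \<omega> = Some s"
  shows "\<bar>s\<bar> \<le> zeta"
  using assms(2)
proof (induction t arbitrary: s)
  case 0
  then show ?case using assms(1) by simp
next
  case (Suc t)
  then show ?case by (auto simp: Let_def split: option.splits if_splits)
qed

lemma absS_cong:
  assumes "\<bar>s0\<bar> \<le> zeta"
    and "\<And>t' k. t' < t \<Longrightarrow> \<bar>k\<bar> \<le> zeta \<Longrightarrow> eta1 t' k \<omega>1 = eta2 t' k \<omega>2"
  shows "absS zeta wk pol eta1 s0 t \<omega>1 = absS zeta wk pol eta2 s0 t \<omega>2"
  using assms(2)
proof (induction t)
  case 0
  then show ?case by simp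
next
  case (Suc t)
  then have IH: "absS zeta wk pol eta1 s0 t \<omega>1 = absS zeta wk pol eta2 s0 t \<omega>2" by auto
  show ?case
  proof (cases "absS zeta wk pol eta1 s0 t \<omega>1")
    case None
    then show ?thesis using IH by simp
  next
    case (Some s)
    then have "\<bar>s\<bar> \<le> zeta"
      by (rule absS_bounded[OF assms(1)])
    then have "eta1 t s \<omega>1 = eta2 t s \<omega>2"
      using Suc.prems by simp
    then show ?thesis using Some IH by (simp add: Let_def)
  qed
qed

lemma absS_add:
  "absS zeta wk pol eta s0 (t + m) \<omega> =
     (case absS zeta wk pol eta s0 t \<omega> of
        None \<Rightarrow> None
      | Some s \<Rightarrow> absS zeta wk pol (\<lambda>t' k. eta (t + t') k) s m \<omega>)"
  by (induction m) (auto split: option.split)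

lemma sets_PiM_count_space_finite:
  "finite I \<Longrightarrow> sets (PiM I (\<lambda>_. count_space (UNIV :: 'b :: countable set))) = Pow (PiE I (\<lambda>_. UNIV))"
  by (simp add: count_space_PiM_finite)

locale absorbing_system = prob_space M for M :: "'a measure" +
  fixes zeta w :: int and wk pol :: "int \<Rightarrow> int" and eta :: "nat \<Rightarrow> int \<Rightarrow> 'a \<Rightarrow> nat"
  assumes w_gt_1: "w > 1" and wk_ge_w: "\<forall>k. wk k \<ge> w" and pol_range: "\<forall>k. pol k \<in> {-1, 0, 1}"
    and indep_eta: "indep_vars (\<lambda>_. count_space UNIV) (\<lambda>(t, k). eta t k) (UNIV :: (nat \<times> int) set)"
    and distr_eta: "\<forall>t k. distr M (count_space UNIV) (eta t k) = measure_pmf (binomial_pmf (nat (wk k)) (1/2))"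
begin

abbreviation run_from :: "nat \<Rightarrow> int \<Rightarrow> nat \<Rightarrow> 'a \<Rightarrow> int option" where
  "run_from c s m \<omega> \<equiv> absS zeta wk pol (\<lambda>t k. eta (c + t) k) s m \<omega>"

abbreviation survival :: "nat \<Rightarrow> int \<Rightarrow> nat \<Rightarrow> real" where
  "survival c s m \<equiv> prob {\<omega> \<in> space M. run_from c s m \<omega> \<noteq> None}"

definition eta_on :: "(nat \<times> int) set \<Rightarrow> 'a \<Rightarrow> nat \<times> int \<Rightarrow> nat" where
  "eta_on I \<omega> = restrict (\<lambda>i. (\<lambda>(t, k). eta t k) i \<omega>) I"

definition window :: "nat \<Rightarrow> nat \<Rightarrow> (nat \<times> int) set" where
  "window c m = {c..<c + m} \<times> {-zeta..zeta}"

lemma finite_window: "finite (window c m)"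
  by (simp add: window_def)

lemma eta_measurable: "eta t k \<in> measurable M (count_space UNIV)"
  using indep_eta unfolding indep_vars_def2 by (metis (no_types, lifting) UNIV_I case_prod_conv)

lemma eta_on_measurable: "eta_on I \<in> measurable M (PiM I (\<lambda>_. count_space UNIV))"
  unfolding eta_on_def by (intro measurable_restrict) (auto intro: eta_measurable)

lemma run_from_eq_eta_on:
  "\<bar>s\<bar> \<le> zeta \<Longrightarrow>
     run_from c s m \<omega> = absS zeta wk pol (\<lambda>t k f. f (c + t, k)) s m (eta_on (window c m) \<omega>)"
  by (rule absS_cong) (auto simp: eta_on_def window_def)

lemma run_from_event:
  assumes "\<bar>s\<bar> \<le> zeta"
  shows "{\<omega> \<in> space M. Q (run_from c s m \<omega>)} =
     eta_on (window c m) -` {f \<in> PiE (window c m) (\<lambda>_. UNIV).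
       Q (absS zeta wk pol (\<lambda>t k f. f (c + t, k)) s m f)} \<inter> space M"
  using run_from_eq_eta_on[OF assms] by (auto simp: eta_on_def)

lemma run_from_event_in_events:
  assumes "\<bar>s\<bar> \<le> zeta"
  shows "{\<omega> \<in> space M. Q (run_from c s m \<omega>)} \<in> events"
  unfolding run_from_event[OF assms]
  by (intro measurable_sets[OF eta_on_measurable])
     (auto simp: sets_PiM_count_space_finite finite_window)

lemma prob_eta_on_indep:
  assumes "I1 \<inter> I2 = {}" "finite I1" "finite I2"
    and "A1 \<subseteq> PiE I1 (\<lambda>_. UNIV)" "A2 \<subseteq> PiE I2 (\<lambda>_. UNIV)"
  shows "prob ((eta_on I1 -` A1 \<inter> space M) \<inter> (eta_on I2 -` A2 \<inter> space M))
       = prob (eta_on I1 -` A1 \<inter> space M) * prob (eta_on I2 -` A2 \<inter> space M)"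
proof -
  let ?I = "\<lambda>b::bool. if b then I1 else I2"
  let ?A = "\<lambda>b::bool. if b then A1 else A2"
  have "indep_vars (\<lambda>b. PiM (?I b) (\<lambda>_. count_space UNIV)) (\<lambda>b. eta_on (?I b)) UNIV"
    unfolding eta_on_def using assms(1)
    by (intro indep_vars_restrict[OF indep_eta]) (auto simp: disjoint_family_on_def)
  then have "prob (\<Inter>b\<in>UNIV. eta_on (?I b) -` ?A b \<inter> space M)
           = (\<Prod>b\<in>UNIV. prob (eta_on (?I b) -` ?A b \<inter> space M))"
    using assms by (intro indep_varsD) (auto simp: sets_PiM_count_space_finite)
  then show ?thesis by (simp add: UNIV_bool Int_commute mult.commute)
qed

lemma run_from_add:
  "run_from c s0 (t + m) \<omega> = (case run_from c s0 t \<omega> of None \<Rightarrow> None | Some s \<Rightarrow> run_from (c + t) s m \<omega>)"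
proof -
  have shift: "(\<lambda>t' k. (\<lambda>t k. eta (c + t) k) (t + t') k) = (\<lambda>t' k. eta (c + t + t') k)"
    by (simp add: add.assoc)
  show ?thesis
    using absS_add[of zeta wk pol "\<lambda>t k. eta (c + t) k" s0 t m \<omega>] unfolding shift .
qed

text \<open>Markov property: the run after time c + t depends only on the variables of a window
  disjoint from the one determining the state at time c + t.\<close>

lemma survival_add:
  assumes s0: "\<bar>s0\<bar> \<le> zeta"
  shows "survival c s0 (t + m) =
    (\<Sum>s\<in>{-zeta..zeta}. prob {\<omega> \<in> space M. run_from c s0 t \<omega> = Some s} * survival (c + t) s m)"
proof -
  let ?E1 = "\<lambda>s. {\<omega> \<in> space M. run_from c s0 t \<omega> = Some s}"
  let ?E2 = "\<lambda>s. {\<omega> \<in> space M. run_from (c + t) s m \<omega> \<noteq> None}"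
  have survivors: "{\<omega> \<in> space M. run_from c s0 (t + m) \<omega> \<noteq> None} = (\<Union>s\<in>{-zeta..zeta}. ?E1 s \<inter> ?E2 s)"
  proof (intro set_eqI iffI)
    fix \<omega> assume "\<omega> \<in> {\<omega> \<in> space M. run_from c s0 (t + m) \<omega> \<noteq> None}"
    then obtain s where s: "run_from c s0 t \<omega> = Some s" "\<omega> \<in> ?E1 s \<inter> ?E2 s"
      by (auto simp: run_from_add split: option.splits)
    moreover from s(1) have "\<bar>s\<bar> \<le> zeta"
      by (rule absS_bounded[OF s0])
    ultimately show "\<omega> \<in> (\<Union>s\<in>{-zeta..zeta}. ?E1 s \<inter> ?E2 s)"
      by auto
  qed (auto simp: run_from_add)
  have "survival c s0 (t + m) = (\<Sum>s\<in>{-zeta..zeta}. prob (?E1 s \<inter> ?E2 s))"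
    unfolding survivors using s0
    by (intro finite_measure_finite_Union)
       (auto intro!: sets.Int run_from_event_in_events simp: disjoint_family_on_def abs_le_iff)
  also have "\<dots> = (\<Sum>s\<in>{-zeta..zeta}. prob (?E1 s) * prob (?E2 s))"
  proof (intro sum.cong refl)
    fix s assume "s \<in> {-zeta..zeta}"
    then have "\<bar>s\<bar> \<le> zeta" by auto
    then show "prob (?E1 s \<inter> ?E2 s) = prob (?E1 s) * prob (?E2 s)"
      unfolding run_from_event[OF s0, of "\<lambda>x. x = Some s" c t]
        run_from_event[OF \<open>\<bar>s\<bar> \<le> zeta\<close>, of "\<lambda>x. x \<noteq> None" "c + t" m]
      by (intro prob_eta_on_indep finite_window) (auto simp: window_def)
  qed
  finally show ?thesis .
qed

lemma survival_eq_sum: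
  assumes "\<bar>s0\<bar> \<le> zeta"
  shows "survival c s0 t = (\<Sum>s\<in>{-zeta..zeta}. prob {\<omega> \<in> space M. run_from c s0 t \<omega> = Some s})"
  using survival_add[OF assms, of c t 0] by (simp add: prob_space)

lemma prob_step:
  assumes s: "\<bar>s\<bar> \<le> zeta" and s': "\<bar>s'\<bar> \<le> zeta"
  shows "prob {\<omega> \<in> space M. run_from c s 1 \<omega> = Some s'} =
    (\<Sum>h\<le>nat (wk s). if s + pol s + 2 * int h - int (nat (wk s)) = s' then binom_half (nat (wk s)) h else 0)"
proof -
  define n where "n = nat (wk s)"
  have wn: "wk s = int n"
    using wk_ge_w w_gt_1 by (simp add: n_def) (smt (verit))
  let ?A = "{h. s + pol s + 2 * int h - int n = s'}"
  have "{\<omega> \<in> space M. run_from c s 1 \<omega> = Some s'} = eta c s -` ?A \<inter> space M"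
    using s s' wn by (auto simp: Let_def)
  then have "prob {\<omega> \<in> space M. run_from c s 1 \<omega> = Some s'}
      = measure (distr M (count_space UNIV) (eta c s)) ?A"
    by (simp add: measure_distr[OF eta_measurable])
  also have "\<dots> = measure (binomial_pmf n (1/2)) ?A"
    using distr_eta by (simp add: n_def)
  also have "\<dots> = measure (binomial_pmf n (1/2)) (?A \<inter> set_pmf (binomial_pmf n (1/2)))"
    by (rule measure_Int_set_pmf[symmetric])
  also have "\<dots> = (\<Sum>h \<in> ?A \<inter> {..n}. pmf (binomial_pmf n (1/2)) h)"
    by (simp add: measure_measure_pmf_finite)
  also have "\<dots> = (\<Sum>h \<in> {h \<in> {..n}. s + pol s + 2 * int h - int n = s'}. binom_half n h)"
    by (intro sum.cong) (auto simp del: pmf_binomial simp: pmf_binomial_half)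
  also have "\<dots> = (\<Sum>h\<le>n. if s + pol s + 2 * int h - int n = s' then binom_half n h else 0)"
    by (rule sum.inter_filter) simp
  finally show ?thesis by (simp only: n_def)
qed

lemma survival_Suc_le:
  assumes s: "\<bar>s\<bar> \<le> zeta"
    and IH: "\<And>c' s'. \<bar>s'\<bar> \<le> zeta \<Longrightarrow> survival c' s' m \<le> 1 - G s'"
  shows "survival c s (1 + m) \<le>
    1 - (\<Sum>h\<le>nat (wk s). binom_half (nat (wk s)) h *
      (if \<bar>s + pol s + 2 * int h - int (nat (wk s))\<bar> \<le> zeta
       then G (s + pol s + 2 * int h - int (nat (wk s))) else 1))"
proof -
  define n where "n = nat (wk s)"
  define D where "D h = s + pol s + 2 * int h - int n" for h
  let ?K = "{-zeta..zeta}"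
  have "survival c s (1 + m) =
    (\<Sum>s'\<in>?K. prob {\<omega> \<in> space M. run_from c s 1 \<omega> = Some s'} * survival (c + 1) s' m)"
    by (rule survival_add[OF s])
  also have "\<dots> \<le> (\<Sum>s'\<in>?K. prob {\<omega> \<in> space M. run_from c s 1 \<omega> = Some s'} * (1 - G s'))"
    by (intro sum_mono mult_left_mono IH) auto
  also have "\<dots> = (\<Sum>s'\<in>?K. \<Sum>h\<le>n. if D h = s' then binom_half n h * (1 - G s') else 0)"
  proof (intro sum.cong refl)
    fix s' assume "s' \<in> ?K"
    then have s': "\<bar>s'\<bar> \<le> zeta" by auto
    show "prob {\<omega> \<in> space M. run_from c s 1 \<omega> = Some s'} * (1 - G s')
        = (\<Sum>h\<le>n. if D h = s' then binom_half n h * (1 - G s') else 0)"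
      unfolding prob_step[OF s s'] sum_distrib_right D_def n_def by (intro sum.cong refl) auto
  qed
  also have "\<dots> = (\<Sum>h\<le>n. \<Sum>s'\<in>?K. if D h = s' then binom_half n h * (1 - G s') else 0)"
    by (rule sum.swap)
  also have "\<dots> = (\<Sum>h\<le>n. if D h \<in> ?K then binom_half n h * (1 - G (D h)) else 0)"
    by (simp add: sum.delta)
  also have "\<dots> = (\<Sum>h\<le>n. binom_half n h) - (\<Sum>h\<le>n. binom_half n h * (if \<bar>D h\<bar> \<le> zeta then G (D h) else 1))"
    unfolding sum_subtractf[symmetric] by (intro sum.cong refl) (auto simp: algebra_simps)
  finally show ?thesis by (simp only: sum_binom_half D_def n_def)
qed

lemma w_le_nat_wk: "int (nat (wk s)) \<ge> w"
  using wk_ge_w[rule_format, of s] w_gt_1 by simp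

lemma survival_le_exit_lb: "\<bar>s\<bar> \<le> zeta \<Longrightarrow> survival c s m \<le> 1 - exit_lb zeta w m s"
proof (induction m arbitrary: c s)
  case 0
  then show ?case by (simp add: exit_lb_def)
next
  case (Suc m)
  have "survival c s (1 + m) \<le>
      1 - (\<Sum>h\<le>nat (wk s). binom_half (nat (wk s)) h * exit_lb_next zeta w m s (pol s) (nat (wk s)) h)"
    unfolding exit_lb_next_def by (rule survival_Suc_le[OF Suc.prems Suc.IH])
  moreover have "exit_lb zeta w (Suc m) s
      \<le> (\<Sum>h\<le>nat (wk s). binom_half (nat (wk s)) h * exit_lb_next zeta w m s (pol s) (nat (wk s)) h)"
    using Suc.prems pol_range w_gt_1 w_le_nat_wk by (intro exit_lb_Suc) auto
  ultimately show ?case by simp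
qed

lemma survival_block:
  assumes s: "\<bar>s\<bar> \<le> zeta" and block: "zeta + 1 \<le> int (Suc m) * (w - 1)"
  shows "survival c s (Suc m) \<le> 1 - (1/2) ^ nat (w * int (Suc m))"
proof -
  have "survival c s (1 + m) \<le>
      1 - (\<Sum>h\<le>nat (wk s). binom_half (nat (wk s)) h * exit_lb_next zeta w m s (pol s) (nat (wk s)) h)"
    unfolding exit_lb_next_def by (rule survival_Suc_le[OF s survival_le_exit_lb])
  moreover have "(1/2) ^ nat (w * int (Suc m))
      \<le> (\<Sum>h\<le>nat (wk s). binom_half (nat (wk s)) h * exit_lb_next zeta w m s (pol s) (nat (wk s)) h)"
    using s pol_range w_gt_1 w_le_nat_wk block by (intro exit_within_block) auto
  ultimately show ?thesis by simp
qed

lemma survival_add_block: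
  assumes s0: "\<bar>s0\<bar> \<le> zeta" and block: "zeta + 1 \<le> int (Suc m) * (w - 1)"
  shows "survival c s0 (t + Suc m) \<le> (1 - (1/2) ^ nat (w * int (Suc m))) * survival c s0 t"
proof -
  let ?r = "1 - (1/2::real) ^ nat (w * int (Suc m))"
  have "survival c s0 (t + Suc m) =
    (\<Sum>s\<in>{-zeta..zeta}. prob {\<omega> \<in> space M. run_from c s0 t \<omega> = Some s} * survival (c + t) s (Suc m))"
    by (rule survival_add[OF s0])
  also have "\<dots> \<le> (\<Sum>s\<in>{-zeta..zeta}. prob {\<omega> \<in> space M. run_from c s0 t \<omega> = Some s} * ?r)"
    using survival_block[OF _ block] by (intro sum_mono mult_left_mono) auto
  also have "\<dots> = ?r * survival c s0 t"
    unfolding survival_eq_sum[OF s0] by (simp add: sum_distrib_left mult.commute)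
  finally show ?thesis .
qed

lemma survival_le_block_power:
  assumes s0: "\<bar>s0\<bar> \<le> zeta" and block: "zeta + 1 \<le> int (Suc m) * (w - 1)"
  shows "survival 0 s0 t \<le> (1 - (1/2) ^ nat (w * int (Suc m))) ^ (t div Suc m)"
proof -
  let ?r = "1 - (1/2::real) ^ nat (w * int (Suc m))"
  have "?r \<ge> 0"
    by (simp add: power_le_one)
  have "survival 0 s0 (k * Suc m + t mod Suc m) \<le> ?r ^ k" for k
  proof (induction k)
    case 0
    then show ?case by simp
  next
    case (Suc k)
    have "survival 0 s0 ((k * Suc m + t mod Suc m) + Suc m) \<le> ?r * survival 0 s0 (k * Suc m + t mod Suc m)"
      by (rule survival_add_block[OF s0 block])
    also have "\<dots> \<le> ?r * ?r ^ k"
      using Suc.IH \<open>?r \<ge> 0\<close> by (intro mult_left_mono)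
    finally show ?case by (simp add: algebra_simps)
  qed
  from this[of "t div Suc m"] show ?thesis
    unfolding div_mult_mod_eq by simp
qed

end

lemma le_geometric_of_block_power:
  fixes \<rho> \<sigma> p :: real and T t :: nat
  assumes \<rho>: "0 < \<rho>" "\<rho> \<le> 1" and T: "T > 0" and \<sigma>: "\<rho> powr (1 / real T) < \<sigma>"
    and p: "p \<le> \<rho> ^ (t div T)" "p \<le> 1"
  shows "p \<le> 1 / \<rho> * \<sigma> ^ t"
proof (cases "\<sigma> \<ge> 1")
  case True
  have "1 * 1 \<le> 1 / \<rho> * \<sigma> ^ t"
    using \<rho> True by (intro mult_mono one_le_power) auto
  then show ?thesis using p by linarith
next
  case False
  have "\<rho> = (\<rho> powr (1 / real T)) ^ T"
    using \<rho> T by (simp add: powr_realpow [symmetric] powr_powr)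
  also have "\<dots> < \<sigma> ^ T"
    using \<sigma> \<rho> T by (intro power_strict_mono) auto
  finally have \<rho>_lt: "\<rho> < \<sigma> ^ T" .
  have "\<rho> powr (1 / real T) > 0"
    using \<rho> by simp
  then have "\<sigma> > 0"
    using \<sigma> by linarith
  have "\<rho> ^ (t div T) * \<rho> \<le> (\<sigma> ^ T) ^ (t div T) * \<sigma> ^ (t mod T)"
  proof (intro mult_mono power_mono)
    have "\<sigma> ^ T \<le> \<sigma> ^ (t mod T)"
      using False \<open>\<sigma> > 0\<close> T by (intro power_decreasing) auto
    then show "\<rho> \<le> \<sigma> ^ (t mod T)"
      using \<rho>_lt by simp
  qed (use \<rho>_lt \<rho> \<open>\<sigma> > 0\<close> in auto)
  also have "\<dots> = \<sigma> ^ t"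
    by (simp only: power_mult[symmetric] power_add[symmetric] mult_div_mod_eq)
  finally have "\<rho> * p \<le> \<sigma> ^ t"
    using p \<rho> by (smt (verit) mult_left_mono mult.commute)
  then show ?thesis
    using \<rho> by (simp add: field_simps)
qed

lemma succ_le_succ_div_mult:
  fixes a d :: int
  assumes "0 < d"
  shows "a + 1 \<le> (a div d + 1) * d"
proof -
  have "a div d * d + a mod d = a" "a mod d < d" "(a div d + 1) * d = a div d * d + d"
    using assms by (simp_all add: distrib_right)
  then show ?thesis
    by linarith
qed

lemma two_powr_minus: "0 \<le> k \<Longrightarrow> 2 powr (- real_of_int k) = (1/2::real) ^ nat k"
  by (simp add: powr_minus powr_realpow power_one_over inverse_eq_divide flip: of_nat_nat)

theorem lemma4:
  fixes M :: "'a measure"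
    and zeta w :: int
    and wk pol :: "int \<Rightarrow> int"
    and eta :: "nat \<Rightarrow> int \<Rightarrow> 'a \<Rightarrow> nat"
  assumes "prob_space M"
    and "zeta > 0"
    and "w > 1"
    and "\<forall>k. wk k \<ge> w"
    and "\<forall>k. pol k \<in> {-1, 0, 1}"
    and "prob_space.indep_vars M (\<lambda>_. count_space UNIV) (\<lambda>(t, k). eta t k) (UNIV :: (nat \<times> int) set)"
    and "\<forall>t k. distr M (count_space UNIV) (eta t k) = measure_pmf (binomial_pmf (nat (wk k)) (1/2))"
  shows "let tau = zeta div (w - 1) + 1 in
         \<exists>C > 0. \<forall>\<sigma> :: real. \<sigma> > (1 - 2 powr (- real_of_int (w * tau))) powr (1 / real_of_int tau) \<longrightarrow>
           (\<forall>t :: nat. \<forall>s0 :: int. \<bar>s0\<bar> \<le> zeta \<longrightarrow>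
              measure M {\<omega> \<in> space M. absS zeta wk pol eta s0 t \<omega> \<noteq> None} \<le> C * \<sigma> ^ t)"
proof -
  interpret absorbing_system M zeta w wk pol eta
    using assms by (simp add: absorbing_system_def absorbing_system_axioms_def)
  define m where "m = nat (zeta div (w - 1))"
  have tau: "zeta div (w - 1) + 1 = int (Suc m)"
    using assms(2,3) by (simp add: m_def pos_imp_zdiv_nonneg_iff)
  have "0 < w - 1"
    using assms(3) by simp
  from succ_le_succ_div_mult[OF this, of zeta]
  have block: "zeta + 1 \<le> int (Suc m) * (w - 1)"
    unfolding tau .
  define \<rho> where "\<rho> = 1 - (1/2::real) ^ nat (w * int (Suc m))"
  have "0 < nat (w * int (Suc m))"
    using assms(3) by simp
  then have \<rho>: "0 < \<rho>" "\<rho> \<le> 1"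
    by (auto simp: \<rho>_def power_less_one_iff simp del: nat_mult_distrib)
  have "2 powr (- real_of_int (w * int (Suc m))) = (1/2) ^ nat (w * int (Suc m))"
    using assms(3) by (intro two_powr_minus) simp
  then have base: "(1 - 2 powr (- real_of_int (w * int (Suc m)))) powr (1 / real_of_int (int (Suc m)))
      = \<rho> powr (1 / real (Suc m))"
    unfolding \<rho>_def by simp
  show ?thesis
    unfolding Let_def tau base
  proof (intro exI[of _ "1 / \<rho>"] conjI allI impI)
    fix \<sigma> :: real and t :: nat and s0 :: int
    assume "\<rho> powr (1 / real (Suc m)) < \<sigma>" and "\<bar>s0\<bar> \<le> zeta"
    then show "measure M {\<omega> \<in> space M. absS zeta wk pol eta s0 t \<omega> \<noteq> None} \<le> 1 / \<rho> * \<sigma> ^ t"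
      using survival_le_block_power[OF _ block, of s0 t] \<rho>
      by (intro le_geometric_of_block_power[of \<rho> "Suc m"]) (auto simp: \<rho>_def)
  qed (use \<rho> in simp)
qed

end
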